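(* For every $n\ge1$, $N(0)=\#\Big\{(k_1,\dots,k_n)\in\mathbb{Z}^n:0\le k_i\le s_i-2,\ \sum_{i=1}^n\frac{k_i}{s_i}\le1\Big\}-1$.
   Context: Sylvester numbers: $s_0=2$, $s_{k+1}=1+\prod_{i=0}^ks_i$. Fix $n\ge1$, $d=\prod_{i=0}^ns_i$, $a_i=d/s_i$ for $0\le i\le n$, $a_{n+1}=1$. For $\ell\in\{0,\dots,d-1\}$ let $\tilde\theta_i(\ell)=\{\ell/s_i\}$ (fractional part) for $0\le i\le n$ and $\tilde\theta_{n+1}(\ell)=\ell/d$; $T_0(\ell)=\{i\in\{0,\dots,n+1\}:\tilde\theta_i(\ell)=0\}$, $T_1(\ell)=\{0,\dots,n+1\}\setminus T_0(\ell)$; $A(\ell)=\sum_{i\in T_1(\ell)}(\frac d2-a_i)$, $B(\ell)=\sum_{i\in T_1(\ell)}(d\tilde\theta_i(\ell)-\frac d2)$. $N(\ell)$ is the number of integer tuples $(k_i)_{i\in T_0(\ell)}$ with $0\le k_i\le s_i-2$ for $0\le i\le n$ and $0\le k_{n+1}\le d-2$ (if $n+1\in T_0(\ell)$), such that $A(\ell)+\sum_{i\in T_0(\ell)}k_ia_i=d$ and $B(\ell)=0$ (so $N(\ell)=0$ if $B(\ell)\ne0$). *)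

theory Defs
  imports Complex_Main
begin

function sylv :: "nat \<Rightarrow> nat" where
  "sylv k = (if k = 0 then 2 else 1 + (\<Prod>i<k. sylv i))"
  by auto
termination
  by (relation "measure id") auto

definition dd :: "nat \<Rightarrow> nat" where
  "dd n = (\<Prod>i\<le>n. sylv i)"

definition aa :: "nat \<Rightarrow> nat \<Rightarrow> nat" where
  "aa n i = (if i \<le> n then dd n div sylv i else 1)"

definition theta :: "nat \<Rightarrow> nat \<Rightarrow> nat \<Rightarrow> real" where
  "theta n i l = (if i \<le> n then frac (real l / real (sylv i)) else real l / real (dd n))"

definition T0 :: "nat \<Rightarrow> nat \<Rightarrow> nat set" where
  "T0 n l = {i \<in> {0..n+1}. theta n i l = 0}"

definition T1 :: "nat \<Rightarrow> nat \<Rightarrow> nat set" where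
  "T1 n l = {0..n+1} - T0 n l"

definition AA :: "nat \<Rightarrow> nat \<Rightarrow> real" where
  "AA n l = (\<Sum>i\<in>T1 n l. real (dd n) / 2 - real (aa n i))"

definition BB :: "nat \<Rightarrow> nat \<Rightarrow> real" where
  "BB n l = (\<Sum>i\<in>T1 n l. real (dd n) * theta n i l - real (dd n) / 2)"

definition ub :: "nat \<Rightarrow> nat \<Rightarrow> int" where
  "ub n i = (if i \<le> n then int (sylv i) - 2 else int (dd n) - 2)"

text \<open>Tuples (k_i) indexed by T0 are represented as functions nat => int
  vanishing outside T0.\<close>
definition NN :: "nat \<Rightarrow> nat \<Rightarrow> nat" where
  "NN n l = card {k :: nat \<Rightarrow> int.
     (\<forall>i. i \<notin> T0 n l \<longrightarrow> k i = 0) \<and>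
     (\<forall>i\<in>T0 n l. 0 \<le> k i \<and> k i \<le> ub n i) \<and>
     AA n l + (\<Sum>i\<in>T0 n l. real_of_int (k i) * real (aa n i)) = real (dd n) \<and>
     BB n l = 0}"

end

theory Submission
  imports Defs
begin

(* At l = 0 every theta vanishes, so N(0) counts the k with k_0 = 0 (as s_0 - 2 = 0),
   0 <= k_i <= s_i - 2 for 1 <= i <= n, 0 <= k_(n+1) <= d - 2 and
   sum_(i=1..n) k_i a_i + k_(n+1) = d.  The last coordinate is a slack variable:
   eliminating it leaves the k_1 .. k_n with 2 <= sum_i k_i a_i <= d.  Dividing by d,
   the upper bound is sum_i k_i / s_i <= 1; since every a_i with i >= 1 is even and
   positive, the lower bound only excludes the zero tuple. *)

definition int_box :: "'a set \<Rightarrow> ('a \<Rightarrow> int) \<Rightarrow> ('a \<Rightarrow> int) set" where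
  "int_box I u = {k. (\<forall>i. i \<notin> I \<longrightarrow> k i = 0) \<and> (\<forall>i\<in>I. 0 \<le> k i \<and> k i \<le> u i)}"

lemma finite_int_box:
  assumes "finite I"
  shows "finite (int_box I u)"
proof -
  have "int_box I u \<subseteq>
      {k. \<forall>i. (i \<in> I \<longrightarrow> k i \<in> (\<Union>j\<in>I. {0..u j})) \<and> (i \<notin> I \<longrightarrow> k i = 0)}"
    by (auto simp: int_box_def)
  moreover have "finite \<dots>"
    using assms by (intro finite_set_of_finite_funs) auto
  ultimately show ?thesis by (rule finite_subset)
qed

lemma zero_in_int_box: "(\<And>i. i \<in> I \<Longrightarrow> 0 \<le> u i) \<Longrightarrow> (\<lambda>_. 0) \<in> int_box I u"
  by (simp add: int_box_def)

lemma int_box_cong: "(\<And>i. i \<in> I \<Longrightarrow> u i = v i) \<Longrightarrow> int_box I u = int_box I v"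
  by (simp add: int_box_def)

lemma int_box_insert_zero: "u i = 0 \<Longrightarrow> int_box (insert i I) u = int_box I u"
  by (cases "i \<in> I") (auto simp: int_box_def insert_absorb intro: order.antisym)

lemma sum_int_box_superset:
  assumes "finite J" "I \<subseteq> J" "k \<in> int_box I u"
  shows "(\<Sum>i\<in>J. k i * w i) = (\<Sum>i\<in>I. k i * w i)"
  using assms by (intro sum.mono_neutral_right) (auto simp: int_box_def)

lemma card_int_box_eliminate_slack:
  fixes w :: "'a \<Rightarrow> int"
  assumes "finite I" "j \<notin> I" "w j = 1"
  shows "card {k \<in> int_box (insert j I) (u(j := c - m)). (\<Sum>i\<in>insert j I. k i * w i) = c}
       = card {k \<in> int_box I u. m \<le> (\<Sum>i\<in>I. k i * w i) \<and> (\<Sum>i\<in>I. k i * w i) \<le> c}"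
proof (rule bij_betw_same_card)
  define \<sigma> where "\<sigma> k = (\<Sum>i\<in>I. k i * w i)" for k :: "'a \<Rightarrow> int"
  have \<sigma>_upd: "\<sigma> (k(j := x)) = \<sigma> k" for k x
    unfolding \<sigma>_def using assms(2) by (intro sum.cong) auto
  have sum_insert: "(\<Sum>i\<in>insert j I. k i * w i) = k j + \<sigma> k" for k
    using assms by (simp add: \<sigma>_def)
  show "bij_betw (\<lambda>k. k(j := 0))
      {k \<in> int_box (insert j I) (u(j := c - m)). (\<Sum>i\<in>insert j I. k i * w i) = c}
      {k \<in> int_box I u. m \<le> \<sigma> k \<and> \<sigma> k \<le> c}"
    by (rule bij_betw_byWitness[where f' = "\<lambda>k. k(j := c - \<sigma> k)"])
      (use assms(2) in \<open>auto simp: int_box_def sum_insert \<sigma>_upd split: if_splits\<close>)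
qed

lemma weighted_sum_ge_iff_nonzero:
  fixes w :: "'a \<Rightarrow> int"
  assumes "finite I" "\<And>i. i \<in> I \<Longrightarrow> m \<le> w i" "0 < m" "k \<in> int_box I u"
  shows "m \<le> (\<Sum>i\<in>I. k i * w i) \<longleftrightarrow> k \<noteq> (\<lambda>_. 0)"
proof
  assume "m \<le> (\<Sum>i\<in>I. k i * w i)"
  then show "k \<noteq> (\<lambda>_. 0)" using \<open>0 < m\<close> by auto
next
  assume "k \<noteq> (\<lambda>_. 0)"
  then obtain j where "k j \<noteq> 0" by auto
  with assms(4) have j: "j \<in> I" "1 \<le> k j"
    unfolding int_box_def by force+
  have w_nonneg: "0 \<le> w i" if "i \<in> I" for i
    using assms(2)[OF that] assms(3) by simp
  have "m \<le> k j * w j"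
    using j assms(2)[of j] w_nonneg[of j] mult_right_mono[of 1 "k j" "w j"] by simp
  also have "\<dots> \<le> (\<Sum>i\<in>I. k i * w i)"
    using assms(1,4) j w_nonneg by (intro member_le_sum) (auto simp: int_box_def)
  finally show "m \<le> (\<Sum>i\<in>I. k i * w i)" .
qed

declare sylv.simps[simp del]

lemma sylv_0: "sylv 0 = 2"
  by (simp add: sylv.simps[of 0])

lemma two_le_sylv: "2 \<le> sylv i"
proof (induction i rule: less_induct)
  case (less i)
  show ?case
  proof (cases "i = 0")
    case True
    then show ?thesis by (simp add: sylv_0)
  next
    case False
    have "1 \<le> (\<Prod>j<i. sylv j)"
      using less by (intro prod_ge_1) force
    with False show ?thesis by (simp add: sylv.simps[of i])
  qed
qed

lemma sylv_pos: "0 < sylv i"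
  using two_le_sylv[of i] by simp

lemma dd_pos: "0 < dd n"
  unfolding dd_def using sylv_pos by (intro prod_pos) auto

lemma sylv_dvd_dd: "i \<le> n \<Longrightarrow> sylv i dvd dd n"
  unfolding dd_def by (rule dvd_prodI) auto

lemma real_aa: "i \<le> n \<Longrightarrow> real (aa n i) = real (dd n) / real (sylv i)"
  using sylv_dvd_dd[of i n] sylv_pos[of i] by (simp add: aa_def real_of_nat_div)

lemma aa_eq_prod: "i \<le> n \<Longrightarrow> aa n i = (\<Prod>j\<in>{..n} - {i}. sylv j)"
proof -
  assume "i \<le> n"
  then have "dd n = sylv i * (\<Prod>j\<in>{..n} - {i}. sylv j)"
    unfolding dd_def by (subst prod.remove[of _ i]) auto
  with \<open>i \<le> n\<close> sylv_pos[of i] show ?thesis by (simp add: aa_def)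
qed

lemma two_le_aa:
  assumes "1 \<le> i" "i \<le> n"
  shows "2 \<le> aa n i"
proof -
  have "sylv 0 dvd (\<Prod>j\<in>{..n} - {i}. sylv j)"
    using assms by (intro dvd_prodI) auto
  moreover have "0 < (\<Prod>j\<in>{..n} - {i}. sylv j)"
    using sylv_pos by (intro prod_pos) auto
  ultimately show ?thesis
    using assms by (simp add: aa_eq_prod sylv_0 dvd_imp_le)
qed

lemma NN_0_eq_card:
  "NN n 0 = card {k \<in> int_box (insert (Suc n) {1..n}) ((\<lambda>i. int (sylv i) - 2)(Suc n := int (dd n) - 2)).
                   (\<Sum>i\<in>insert (Suc n) {1..n}. k i * int (aa n i)) = int (dd n)}"
    (is "_ = card {k \<in> int_box ?I ?u. (\<Sum>i\<in>?I. k i * ?w i) = ?d}")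
proof -
  have T0: "T0 n 0 = {0..n+1}"
    by (auto simp: T0_def theta_def)
  have AA: "AA n 0 = 0" and BB: "BB n 0 = 0"
    by (simp_all add: AA_def BB_def T1_def T0)
  have real_sum_eq_iff: "(\<Sum>i\<in>A. real_of_int (k i) * real (aa n i)) = real (dd n)
      \<longleftrightarrow> (\<Sum>i\<in>A. k i * ?w i) = ?d" for A k
  proof -
    have "(\<Sum>i\<in>A. real_of_int (k i) * real (aa n i)) = real_of_int (\<Sum>i\<in>A. k i * ?w i)"
      and "real (dd n) = real_of_int ?d"
      by simp_all
    then show ?thesis
      by (simp only: of_int_eq_iff)
  qed
  have box_eq: "int_box {0..n+1} (ub n) = int_box ?I ?u"
  proof -
    have "{0..n+1} = insert 0 ?I" by auto
    then have "int_box {0..n+1} (ub n) = int_box ?I (ub n)"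
      by (simp add: int_box_insert_zero ub_def sylv_0)
    also have "\<dots> = int_box ?I ?u"
      by (rule int_box_cong) (auto simp: ub_def)
    finally show ?thesis .
  qed
  have "NN n 0 = card {k \<in> int_box {0..n+1} (ub n). (\<Sum>i\<in>{0..n+1}. k i * ?w i) = ?d}"
    unfolding NN_def int_box_def T0 AA BB add_0 real_sum_eq_iff by (rule arg_cong[where f = card]) auto
  also have "\<dots> = card {k \<in> int_box ?I ?u. (\<Sum>i\<in>?I. k i * ?w i) = ?d}"
  proof -
    have "(\<Sum>i\<in>{0..n+1}. k i * ?w i) = (\<Sum>i\<in>?I. k i * ?w i)" if "k \<in> int_box ?I ?u" for k
      using that by (intro sum_int_box_superset) auto
    then have "{k \<in> int_box ?I ?u. (\<Sum>i\<in>{0..n+1}. k i * ?w i) = ?d}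
        = {k \<in> int_box ?I ?u. (\<Sum>i\<in>?I. k i * ?w i) = ?d}"
      by auto
    then show ?thesis
      unfolding box_eq by simp
  qed
  finally show ?thesis .
qed

lemma sum_div_sylv_le_one_iff:
  "(\<Sum>i\<in>{1..n}. real_of_int (k i) / real (sylv i)) \<le> 1
     \<longleftrightarrow> (\<Sum>i\<in>{1..n}. k i * int (aa n i)) \<le> int (dd n)"
    (is "?s \<le> 1 \<longleftrightarrow> ?\<sigma> \<le> _")
proof -
  have "real (dd n) * ?s = (\<Sum>i\<in>{1..n}. real_of_int (k i) * real (aa n i))"
    unfolding sum_distrib_left by (intro sum.cong refl) (simp add: real_aa)
  also have "\<dots> = real_of_int ?\<sigma>"
    by simp
  finally have scaled: "real (dd n) * ?s = real_of_int ?\<sigma>" .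
  have "?s \<le> 1 \<longleftrightarrow> real (dd n) * ?s \<le> real (dd n) * 1"
    using dd_pos by (simp only: mult_le_cancel_left_pos of_nat_0_less_iff)
  also have "\<dots> \<longleftrightarrow> real_of_int ?\<sigma> \<le> real_of_int (int (dd n))"
    by (simp only: scaled mult_1_right of_int_of_nat_eq)
  finally show ?thesis
    by (simp only: of_int_le_iff)
qed

theorem lemma6p7:
  fixes n :: nat
  assumes "n \<ge> 1"
  shows "int (NN n 0) =
    int (card {k :: nat \<Rightarrow> int.
       (\<forall>i. i \<notin> {1..n} \<longrightarrow> k i = 0) \<and>
       (\<forall>i\<in>{1..n}. 0 \<le> k i \<and> k i \<le> int (sylv i) - 2) \<and>
       (\<Sum>i\<in>{1..n}. real_of_int (k i) / real (sylv i)) \<le> 1}) - 1"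
proof -
  define u where "u i = int (sylv i) - 2" for i
  define \<sigma> where "\<sigma> k = (\<Sum>i\<in>{1..n}. k i * int (aa n i))" for k
  define R where "R = {k \<in> int_box {1..n} u. \<sigma> k \<le> int (dd n)}"
  have zero_in_R: "(\<lambda>_. 0) \<in> R" and finite_R: "finite R"
    using two_le_sylv by (simp_all add: R_def finite_int_box zero_in_int_box u_def \<sigma>_def)
  have "NN n 0 = card {k \<in> int_box {1..n} u. 2 \<le> \<sigma> k \<and> \<sigma> k \<le> int (dd n)}"
    unfolding NN_0_eq_card u_def \<sigma>_def by (rule card_int_box_eliminate_slack) (auto simp: aa_def)
  also have "\<dots> = card (R - {\<lambda>_. 0})"
  proof -
    have "2 \<le> \<sigma> k \<longleftrightarrow> k \<noteq> (\<lambda>_. 0)" if "k \<in> int_box {1..n} u" for k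
      unfolding \<sigma>_def using that by (intro weighted_sum_ge_iff_nonzero) (auto simp: two_le_aa)
    then show ?thesis
      unfolding R_def by (intro arg_cong[where f = card]) auto
  qed
  also have "\<dots> = card R - 1"
    using zero_in_R finite_R by simp
  finally have "NN n 0 = card R - 1" .
  moreover have "1 \<le> card R"
    using zero_in_R finite_R card_0_eq by fastforce
  moreover have "R = {k. (\<forall>i. i \<notin> {1..n} \<longrightarrow> k i = 0) \<and>
       (\<forall>i\<in>{1..n}. 0 \<le> k i \<and> k i \<le> int (sylv i) - 2) \<and>
       (\<Sum>i\<in>{1..n}. real_of_int (k i) / real (sylv i)) \<le> 1}"
    unfolding R_def int_box_def u_def \<sigma>_def sum_div_sylv_le_one_iff by auto
  ultimately show ?thesis
    by (simp add: of_nat_diff)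
qed

end
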